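(* Let $p$ be a prime, and let $f:V_m\to\mathbb{F}_p$ be a dual-bent function and $g:V_n\to\mathbb{F}_p$ a non-dual-bent function, where $V_m,V_n$ are $\mathbb{F}_p$-vector spaces of dimensions $m,n$ with nondegenerate inner products. Then the direct sum $F:V_m\times V_n\to\mathbb{F}_p$, $F(x,y)=f(x)+g(y)$, is a non-dual-bent function.
   Context: Walsh transform of $f:V\to\mathbb{F}_p$ ($\dim V=N$): $\widehat f(b)=\sum_{x\in V}\epsilon_p^{f(x)-\langle b,x\rangle}$, $\epsilon_p=e^{2\pi i/p}$; on $V_m\times V_n$ use $\langle(a,b),(x,y)\rangle=\langle a,x\rangle+\langle b,y\rangle$. $f$ is bent if $|\widehat f(b)|=p^{N/2}$ for all $b$; then $\widehat f(b)=\zeta_bp^{N/2}\epsilon_p^{f^*(b)}$ for some $\zeta_b\in\{\pm1,\pm i\}$ (for $p=2$, $\zeta_b=1$ and $\epsilon_2^{f^*(b)}=(-1)^{f^*(b)}$), defining the dual $f^*$. A bent function is dual-bent if its dual is bent, and non-dual-bent if it is bent but its dual is not bent. *)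

theory Defs
  imports Complex_Main "HOL-Computational_Algebra.Primes"
begin

definition Vsp :: "nat \<Rightarrow> nat \<Rightarrow> (nat \<Rightarrow> int) set" where
  "Vsp p m = {x. \<forall>i. (i < m \<longrightarrow> 0 \<le> x i \<and> x i < int p) \<and> (m \<le> i \<longrightarrow> x i = 0)}"

text \<open>Bilinear form on F_p^m given by a Gram matrix A (values taken mod p).\<close>
definition bform :: "nat \<Rightarrow> (nat \<Rightarrow> nat \<Rightarrow> int) \<Rightarrow> (nat \<Rightarrow> int) \<Rightarrow> (nat \<Rightarrow> int) \<Rightarrow> int" where
  "bform m A x y = (\<Sum>i<m. \<Sum>j<m. x i * A i j * y j)"

definition inner_prod_matrix :: "nat \<Rightarrow> nat \<Rightarrow> (nat \<Rightarrow> nat \<Rightarrow> int) \<Rightarrow> bool" where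
  "inner_prod_matrix p m A \<longleftrightarrow>
     (\<forall>i<m. \<forall>j<m. A i j mod int p = A j i mod int p) \<and>
     (\<forall>b\<in>Vsp p m. (\<forall>x\<in>Vsp p m. bform m A x b mod int p = 0) \<longrightarrow> b = (\<lambda>_. 0))"

definition eps :: "nat \<Rightarrow> int \<Rightarrow> complex" where
  "eps p k = cis (2 * pi * real_of_int k / real p)"

definition walsh :: "nat \<Rightarrow> 'v set \<Rightarrow> ('v \<Rightarrow> 'v \<Rightarrow> int) \<Rightarrow> ('v \<Rightarrow> int) \<Rightarrow> 'v \<Rightarrow> complex" where
  "walsh p S B f b = (\<Sum>x\<in>S. eps p (f x - B b x))"

definition bent :: "nat \<Rightarrow> nat \<Rightarrow> 'v set \<Rightarrow> ('v \<Rightarrow> 'v \<Rightarrow> int) \<Rightarrow> ('v \<Rightarrow> int) \<Rightarrow> bool" where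
  "bent p N S B f \<longleftrightarrow> (\<forall>b\<in>S. cmod (walsh p S B f b) = sqrt (real p) ^ N)"

definition is_dual :: "nat \<Rightarrow> nat \<Rightarrow> 'v set \<Rightarrow> ('v \<Rightarrow> 'v \<Rightarrow> int) \<Rightarrow> ('v \<Rightarrow> int) \<Rightarrow> ('v \<Rightarrow> int) \<Rightarrow> bool" where
  "is_dual p N S B f fs \<longleftrightarrow>
     (\<forall>b\<in>S. 0 \<le> fs b \<and> fs b < int p \<and>
        (\<exists>z. (if p = 2 then z = 1 else z \<in> {1, -1, \<i>, -\<i>}) \<and>
             walsh p S B f b = z * complex_of_real (sqrt (real p) ^ N) * eps p (fs b)))"

definition dual_bent :: "nat \<Rightarrow> nat \<Rightarrow> 'v set \<Rightarrow> ('v \<Rightarrow> 'v \<Rightarrow> int) \<Rightarrow> ('v \<Rightarrow> int) \<Rightarrow> bool" where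
  "dual_bent p N S B f \<longleftrightarrow> bent p N S B f \<and> (\<exists>fs. is_dual p N S B f fs \<and> bent p N S B fs)"

definition non_dual_bent :: "nat \<Rightarrow> nat \<Rightarrow> 'v set \<Rightarrow> ('v \<Rightarrow> 'v \<Rightarrow> int) \<Rightarrow> ('v \<Rightarrow> int) \<Rightarrow> bool" where
  "non_dual_bent p N S B f \<longleftrightarrow> bent p N S B f \<and> (\<exists>fs. is_dual p N S B f fs \<and> \<not> bent p N S B fs)"

end

theory Submission
  imports Defs
begin

text \<open>The Walsh transform of a direct sum F(x,y) = f(x) + g(y) factors as the product of the
  Walsh transforms of f and g. Hence F is bent when f and g are, the sum of duals (reduced
  mod p) is a dual of F, and the Walsh transform of that dual is again the product of the
  Walsh transforms of the duals. Evaluated at a point (0, d) where the dual of g has Walsh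
  value of the wrong absolute value, the bentness of the dual of f forces the same failure
  for the dual of F.\<close>

lemma eps_add: "eps p (k + l) = eps p k * eps p l"
  unfolding eps_def by (simp add: cis_mult[symmetric] add_divide_distrib distrib_left)

lemma eps_mod:
  assumes "p > 0"
  shows "eps p (k mod int p) = eps p k"
proof -
  have "2 * pi * real_of_int (int p * (k div int p)) / real p = 2 * pi * real_of_int (k div int p)"
    using assms by simp
  then have "eps p (int p * (k div int p)) = 1"
    unfolding eps_def by (simp add: cis_multiple_2pi)
  then have "eps p (int p * (k div int p) + k mod int p) = eps p (k mod int p)"
    by (simp only: eps_add mult_1)
  then show ?thesis by simp
qed

lemma walsh_mod:
  assumes "p > 0"
  shows "walsh p S B (\<lambda>x. f x mod int p) b = walsh p S B f b"
proof -
  have "eps p (f x mod int p - B b x) = eps p (f x - B b x)" for x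
    using eps_mod[OF assms, of "f x mod int p - B b x"] eps_mod[OF assms, of "f x - B b x"]
    by (simp add: mod_diff_left_eq)
  then show ?thesis unfolding walsh_def by simp
qed

lemma walsh_direct_sum:
  "walsh p (S \<times> T) (\<lambda>(a, b) (x, y). B1 a x + B2 b y) (\<lambda>(x, y). f x + g y) (a, b)
   = walsh p S B1 f a * walsh p T B2 g b"
proof -
  have "walsh p S B1 f a * walsh p T B2 g b
      = (\<Sum>x\<in>S. \<Sum>y\<in>T. eps p (f x - B1 a x) * eps p (g y - B2 b y))"
    unfolding walsh_def by (rule sum_product)
  also have "\<dots> = (\<Sum>x\<in>S. \<Sum>y\<in>T. eps p ((f x + g y) - (B1 a x + B2 b y)))"
    by (simp add: eps_add[symmetric] algebra_simps)
  finally show ?thesis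
    unfolding walsh_def by (simp add: sum.cartesian_product split_def)
qed

lemma walsh_direct_sum_mod:
  assumes "p > 0"
  shows "walsh p (S \<times> T) (\<lambda>(a, b) (x, y). B1 a x + B2 b y) (\<lambda>(x, y). (f x + g y) mod int p) (a, b)
    = walsh p S B1 f a * walsh p T B2 g b"
  using walsh_mod[OF assms, where f = "\<lambda>(x, y). f x + g y"]
  by (simp add: case_prod_unfold walsh_direct_sum[unfolded case_prod_unfold])

lemma bent_direct_sum:
  assumes "bent p m S B1 f" and "bent p n T B2 g"
  shows "bent p (m + n) (S \<times> T) (\<lambda>(a, b) (x, y). B1 a x + B2 b y) (\<lambda>(x, y). f x + g y)"
  using assms unfolding bent_def by (auto simp: walsh_direct_sum norm_mult power_add)

lemma is_dual_direct_sum: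
  assumes "p > 0"
    and "is_dual p m S B1 f fs" and "is_dual p n T B2 g gs"
  shows "is_dual p (m + n) (S \<times> T) (\<lambda>(a, b) (x, y). B1 a x + B2 b y) (\<lambda>(x, y). f x + g y)
           (\<lambda>(a, b). (fs a + gs b) mod int p)"
  unfolding is_dual_def
proof (intro ballI, clarify)
  fix a b assume "a \<in> S" "b \<in> T"
  obtain z1 where z1: "if p = 2 then z1 = 1 else z1 \<in> {1, -1, \<i>, -\<i>}"
    "walsh p S B1 f a = z1 * complex_of_real (sqrt (real p) ^ m) * eps p (fs a)"
    using assms(2) \<open>a \<in> S\<close> unfolding is_dual_def by blast
  obtain z2 where z2: "if p = 2 then z2 = 1 else z2 \<in> {1, -1, \<i>, -\<i>}"
    "walsh p T B2 g b = z2 * complex_of_real (sqrt (real p) ^ n) * eps p (gs b)"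
    using assms(3) \<open>b \<in> T\<close> unfolding is_dual_def by blast
  have "if p = 2 then z1 * z2 = 1 else z1 * z2 \<in> {1, -1, \<i>, -\<i>}"
    using z1(1) z2(1) by (auto split: if_splits)
  moreover have "0 \<le> (fs a + gs b) mod int p \<and> (fs a + gs b) mod int p < int p"
    using assms(1) by simp
  moreover have "walsh p (S \<times> T) (\<lambda>(a, b) (x, y). B1 a x + B2 b y) (\<lambda>(x, y). f x + g y) (a, b)
      = z1 * z2 * complex_of_real (sqrt (real p) ^ (m + n)) * eps p ((fs a + gs b) mod int p)"
    using z1(2) z2(2) assms(1) by (simp add: walsh_direct_sum eps_mod eps_add power_add)
  ultimately show "0 \<le> (fs a + gs b) mod int p \<and> (fs a + gs b) mod int p < int p \<and>
      (\<exists>z. (if p = 2 then z = 1 else z \<in> {1, -1, \<i>, -\<i>}) \<and>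
        walsh p (S \<times> T) (\<lambda>(a, b) (x, y). B1 a x + B2 b y) (\<lambda>(x, y). f x + g y) (a, b)
        = z * complex_of_real (sqrt (real p) ^ (m + n)) * eps p ((fs a + gs b) mod int p))"
    by blast
qed

lemma not_bent_direct_sum:
  assumes "p > 0" and "S \<noteq> {}"
    and "bent p m S B1 f" and "\<not> bent p n T B2 g"
  shows "\<not> bent p (m + n) (S \<times> T) (\<lambda>(a, b) (x, y). B1 a x + B2 b y)
           (\<lambda>(x, y). (f x + g y) mod int p)"
proof
  assume bent_sum: "bent p (m + n) (S \<times> T) (\<lambda>(a, b) (x, y). B1 a x + B2 b y)
                      (\<lambda>(x, y). (f x + g y) mod int p)"
  obtain c where "c \<in> S" using assms(2) by blast
  obtain d where "d \<in> T" and d: "cmod (walsh p T B2 g d) \<noteq> sqrt (real p) ^ n"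
    using assms(4) unfolding bent_def by blast
  have "sqrt (real p) ^ m * cmod (walsh p T B2 g d) = sqrt (real p) ^ m * sqrt (real p) ^ n"
    using bent_sum assms(3) \<open>c \<in> S\<close> \<open>d \<in> T\<close> unfolding bent_def
    by (force simp: walsh_direct_sum_mod[OF assms(1)] norm_mult power_add)
  then show False using d assms(1) by simp
qed

theorem theorem2:
  fixes p m n :: nat
    and A C :: "nat \<Rightarrow> nat \<Rightarrow> int"
    and f g :: "(nat \<Rightarrow> int) \<Rightarrow> int"
  assumes "prime p"
    and "inner_prod_matrix p m A"
    and "inner_prod_matrix p n C"
    and "dual_bent p m (Vsp p m) (bform m A) f"
    and "non_dual_bent p n (Vsp p n) (bform n C) g"
  shows "non_dual_bent p (m + n) (Vsp p m \<times> Vsp p n)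
           (\<lambda>(a, b) (x, y). bform m A a x + bform n C b y)
           (\<lambda>(x, y). f x + g y)"
proof -
  have "p > 0" using assms(1) prime_gt_0_nat by blast
  have "(\<lambda>_. 0) \<in> Vsp p m" using \<open>p > 0\<close> unfolding Vsp_def by auto
  obtain fs where "bent p m (Vsp p m) (bform m A) f"
    and "is_dual p m (Vsp p m) (bform m A) f fs" and "bent p m (Vsp p m) (bform m A) fs"
    using assms(4) unfolding dual_bent_def by blast
  moreover obtain gs where "bent p n (Vsp p n) (bform n C) g"
    and "is_dual p n (Vsp p n) (bform n C) g gs" and "\<not> bent p n (Vsp p n) (bform n C) gs"
    using assms(5) unfolding non_dual_bent_def by blast
  ultimately show ?thesis
    unfolding non_dual_bent_def
    using bent_direct_sum is_dual_direct_sum[OF \<open>p > 0\<close>]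
      not_bent_direct_sum[OF \<open>p > 0\<close>, of "Vsp p m"] \<open>(\<lambda>_. 0) \<in> Vsp p m\<close>
    by (metis empty_iff)
qed

end
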